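(* Let $C$ be a boundedly compact subset of a metric space $(X,d)$, $T:C\to C$ continuous with $F:=\mathrm{Fix}(T)\ne\emptyset$, and $G,H:\mathbb{R}_+\to\mathbb{R}_+$ satisfying properties (G) and (H). Assume that the sequence $(x_n)$ in $C$ is bounded, $(G,H)$-Fej\'er monotone with respect to $F$, and has approximate fixed points. Then $(x_n)$ converges to a fixed point of $T$. The same conclusion holds if the continuity of $T$ is replaced by the assumption that $F$ is explicitly closed with respect to the representation $\tilde F_k:=\{x\in C\mid d(x,Tx)\le\frac1{k+1}\}$.
   Context: $C$ is boundedly compact if every bounded sequence in $C$ has a subsequence converging in $C$. Property (G): $a_n\to0\Rightarrow G(a_n)\to0$; property (H): $H(a_n)\to0\Rightarrow a_n\to0$ (for all sequences in $\mathbb{R}_+$). $(x_n)$ is $(G,H)$-Fej\'er monotone w.r.t. $F$ if $H(d(x_{n+m},p))\le G(d(x_n,p))$ for all $n,m\in\mathbb{N}$, $p\in F$. $(x_n)$ has approximate fixed points if for every $k$ there is $N$ with $d(x_N,Tx_N)\le\frac1{k+1}$. With $AF_k:=\bigcap_{l\le k}\tilde F_l$, $F$ is explicitly closed if for every $p\in C$: if $AF_M\cap\overline B(p,1/(N+1))\ne\emptyset$ for all $N,M$, then $p\in F$. *)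

theory Defs
  imports "HOL-Analysis.Analysis"
begin

definition boundedly_compact :: "'a::metric_space set \<Rightarrow> bool" where
  "boundedly_compact C \<longleftrightarrow>
     (\<forall>x::nat \<Rightarrow> 'a. (\<forall>n. x n \<in> C) \<and> bounded (range x) \<longrightarrow>
        (\<exists>r l. strict_mono r \<and> l \<in> C \<and> (x \<circ> r) \<longlonglongrightarrow> l))"

definition property_G :: "(real \<Rightarrow> real) \<Rightarrow> bool" where
  "property_G G \<longleftrightarrow>
     (\<forall>a::nat \<Rightarrow> real. (\<forall>n. a n \<ge> 0) \<longrightarrow> a \<longlonglongrightarrow> 0 \<longrightarrow> (\<lambda>n. G (a n)) \<longlonglongrightarrow> 0)"

definition property_H :: "(real \<Rightarrow> real) \<Rightarrow> bool" where
  "property_H H \<longleftrightarrow>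
     (\<forall>a::nat \<Rightarrow> real. (\<forall>n. a n \<ge> 0) \<longrightarrow> (\<lambda>n. H (a n)) \<longlonglongrightarrow> 0 \<longrightarrow> a \<longlonglongrightarrow> 0)"

definition GH_fejer_monotone ::
  "(real \<Rightarrow> real) \<Rightarrow> (real \<Rightarrow> real) \<Rightarrow> (nat \<Rightarrow> 'a::metric_space) \<Rightarrow> 'a set \<Rightarrow> bool" where
  "GH_fejer_monotone G H x F \<longleftrightarrow>
     (\<forall>n m p. p \<in> F \<longrightarrow> H (dist (x (n + m)) p) \<le> G (dist (x n) p))"

definition has_approx_fixed_points :: "('a::metric_space \<Rightarrow> 'a) \<Rightarrow> (nat \<Rightarrow> 'a) \<Rightarrow> bool" where
  "has_approx_fixed_points T x \<longleftrightarrow>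
     (\<forall>k::nat. \<exists>N. dist (x N) (T (x N)) \<le> 1 / (real k + 1))"

definition approx_fix_set :: "'a::metric_space set \<Rightarrow> ('a \<Rightarrow> 'a) \<Rightarrow> nat \<Rightarrow> 'a set" where
  "approx_fix_set C T k = {x \<in> C. dist x (T x) \<le> 1 / (real k + 1)}"

definition AF :: "'a::metric_space set \<Rightarrow> ('a \<Rightarrow> 'a) \<Rightarrow> nat \<Rightarrow> 'a set" where
  "AF C T k = (\<Inter>l\<in>{..k}. approx_fix_set C T l)"

definition explicitly_closed :: "'a::metric_space set \<Rightarrow> ('a \<Rightarrow> 'a) \<Rightarrow> 'a set \<Rightarrow> bool" where
  "explicitly_closed C T F \<longleftrightarrow>
     (\<forall>p\<in>C. (\<forall>N M::nat. AF C T M \<inter> cball p (1 / (real N + 1)) \<noteq> {}) \<longrightarrow> p \<in> F)"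

end

theory Submission
  imports Defs
begin

text \<open>Choosing, for each \<open>k\<close>, an index \<open>N k\<close> with \<open>d(x (N k), T (x (N k))) \<le> 1/(k+1)\<close> and
  using bounded compactness, some subsequence \<open>x \<circ> \<sigma>\<close> of such points converges to a point
  \<open>p \<in> C\<close>. Either hypothesis on \<open>T\<close> makes \<open>p\<close> a fixed point. Finally, \<open>(G,H)\<close>-Fej\'er
  monotonicity transfers the convergence of the subsequence to the whole sequence: every
  \<open>x m\<close> with \<open>m \<ge> \<sigma> j\<close> satisfies \<open>H (d(x m, p)) \<le> G (d(x (\<sigma> j), p))\<close>, and the right-hand
  side tends to \<open>0\<close> by (G), so (H) forces \<open>d(x m, p) \<rightarrow> 0\<close>.\<close>

lemma approx_fixed_points_convergent_subseq:
  fixes C :: "'a::metric_space set" and T :: "'a \<Rightarrow> 'a" and x :: "nat \<Rightarrow> 'a"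
  assumes "boundedly_compact C" and "\<forall>n. x n \<in> C" and "bounded (range x)"
    and "has_approx_fixed_points T x"
  obtains \<sigma> p where "p \<in> C" and "(x \<circ> \<sigma>) \<longlonglongrightarrow> p"
    and "\<And>j. dist (x (\<sigma> j)) (T (x (\<sigma> j))) \<le> 1 / (real j + 1)"
proof -
  obtain N where N: "\<And>k. dist (x (N k)) (T (x (N k))) \<le> 1 / (real k + 1)"
    using assms(4) unfolding has_approx_fixed_points_def by metis
  have "bounded (range (x \<circ> N))"
    by (rule bounded_subset[OF assms(3)]) auto
  then obtain r p where r: "strict_mono r" and "p \<in> C" and "(x \<circ> N \<circ> r) \<longlonglongrightarrow> p"
    using assms(1,2) unfolding boundedly_compact_def by (metis comp_apply)
  moreover have "dist (x (N (r j))) (T (x (N (r j)))) \<le> 1 / (real j + 1)" for j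
  proof -
    have "1 / (real (r j) + 1) \<le> 1 / (real j + 1)"
      using seq_suble[OF r, of j] by (simp add: frac_le)
    with N[of "r j"] show ?thesis by linarith
  qed
  ultimately show thesis
    using that[of p "N \<circ> r"] by (simp add: comp_assoc)
qed

lemma fixed_point_of_tendsto_continuous:
  fixes T :: "'a::metric_space \<Rightarrow> 'a"
  assumes "continuous_on C T" and "\<And>j. y j \<in> C" and "y \<longlonglongrightarrow> p" and "p \<in> C"
    and "\<And>j. dist (y j) (T (y j)) \<le> 1 / (real j + 1)"
  shows "T p = p"
proof -
  have "(\<lambda>j. T (y j)) \<longlonglongrightarrow> T p"
    by (rule continuous_on_tendsto_compose[OF assms(1,3,4)]) (use assms(2) in auto)
  with assms(3) have "(\<lambda>j. dist (y j) (T (y j))) \<longlonglongrightarrow> dist p (T p)"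
    by (intro tendsto_dist)
  moreover have "(\<lambda>j. dist (y j) (T (y j))) \<longlonglongrightarrow> 0"
  proof (rule tendsto_sandwich[of "\<lambda>_. 0" _ _ "\<lambda>j. 1 / (real j + 1)"])
    show "(\<lambda>j. 1 / (real j + 1)) \<longlonglongrightarrow> 0"
      using LIMSEQ_inverse_real_of_nat by (simp add: inverse_eq_divide add.commute)
  qed (use assms(5) in auto)
  ultimately show ?thesis
    using LIMSEQ_unique by fastforce
qed

lemma fixed_point_of_tendsto_explicitly_closed:
  fixes T :: "'a::metric_space \<Rightarrow> 'a"
  assumes "explicitly_closed C T F" and "\<And>j. y j \<in> C" and "y \<longlonglongrightarrow> p" and "p \<in> C"
    and "\<And>j. dist (y j) (T (y j)) \<le> 1 / (real j + 1)"
  shows "p \<in> F"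
proof -
  have "AF C T M \<inter> cball p (1 / (real N + 1)) \<noteq> {}" for N M
  proof -
    obtain j0 where j0: "\<And>j. j \<ge> j0 \<Longrightarrow> dist (y j) p < 1 / (real N + 1)"
      using assms(3) unfolding LIMSEQ_def by (metis dist_commute of_nat_0_le_iff
          zero_less_divide_1_iff add_nonneg_pos zero_less_one)
    define j where "j = max j0 M"
    have "1 / (real j + 1) \<le> 1 / (real l + 1)" if "l \<le> M" for l
      using that by (simp add: j_def frac_le)
    then have "y j \<in> AF C T M"
      unfolding AF_def approx_fix_set_def using assms(2,5) by (fastforce intro: order_trans)
    moreover have "y j \<in> cball p (1 / (real N + 1))"
      using j0[of j] by (simp add: j_def dist_commute)
    ultimately show ?thesis by blast
  qed
  with assms(1,4) show ?thesis
    unfolding explicitly_closed_def by blast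
qed

lemma GH_fejer_monotone_tendsto_beyond_subseq:
  assumes "\<forall>t\<ge>0. H t \<ge> 0" and "property_G G" and "property_H H"
    and "GH_fejer_monotone G H x F" and "p \<in> F" and "(x \<circ> \<sigma>) \<longlonglongrightarrow> p"
    and "\<And>j. m j \<ge> \<sigma> j"
  shows "(\<lambda>j. dist (x (m j)) p) \<longlonglongrightarrow> 0"
proof -
  have "(\<lambda>j. dist (x (\<sigma> j)) p) \<longlonglongrightarrow> 0"
    using tendsto_dist_iff[THEN iffD1, OF assms(6)] by (simp add: o_def)
  then have G0: "(\<lambda>j. G (dist (x (\<sigma> j)) p)) \<longlonglongrightarrow> 0"
    using assms(2) unfolding property_G_def by auto
  have "H (dist (x (m j)) p) \<le> G (dist (x (\<sigma> j)) p)" for j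
    using assms(4,5) assms(7)[of j] unfolding GH_fejer_monotone_def
    by (metis le_add_diff_inverse)
  then have "(\<lambda>j. H (dist (x (m j)) p)) \<longlonglongrightarrow> 0"
    using assms(1) by (intro tendsto_sandwich[OF _ _ tendsto_const G0]) auto
  then show ?thesis
    using assms(3) unfolding property_H_def by auto
qed

lemma GH_fejer_monotone_tendsto_of_subseq:
  assumes "\<forall>t\<ge>0. H t \<ge> 0" and "property_G G" and "property_H H"
    and "GH_fejer_monotone G H x F" and "p \<in> F" and "(x \<circ> \<sigma>) \<longlonglongrightarrow> p"
  shows "x \<longlonglongrightarrow> p"
proof (rule ccontr)
  assume "\<not> x \<longlonglongrightarrow> p"
  then obtain e where "e > 0" and "\<forall>n0. \<exists>n\<ge>n0. dist (x n) p \<ge> e"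
    unfolding LIMSEQ_def by (auto simp: not_less)
  then have "\<forall>j. \<exists>n. n \<ge> \<sigma> j \<and> dist (x n) p \<ge> e" by blast
  then obtain m where m: "\<And>j. m j \<ge> \<sigma> j" and far: "\<And>j. dist (x (m j)) p \<ge> e"
    by metis
  have "(\<lambda>j. dist (x (m j)) p) \<longlonglongrightarrow> 0"
    using GH_fejer_monotone_tendsto_beyond_subseq[OF assms m] .
  then obtain j where "dist (x (m j)) p < e"
    using \<open>e > 0\<close> unfolding LIMSEQ_def by fastforce
  with far[of j] show False by simp
qed

theorem proposition7p3:
  fixes C :: "'a::metric_space set" and T :: "'a \<Rightarrow> 'a"
    and G H :: "real \<Rightarrow> real" and x :: "nat \<Rightarrow> 'a"
  assumes bc: "boundedly_compact C"
    and TC: "T ` C \<subseteq> C"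
    and Fne: "{p \<in> C. T p = p} \<noteq> {}"
    and Gnn: "\<forall>t\<ge>0. G t \<ge> 0" and Hnn: "\<forall>t\<ge>0. H t \<ge> 0"
    and G: "property_G G" and H: "property_H H"
    and xC: "\<forall>n. x n \<in> C"
    and xb: "bounded (range x)"
    and fej: "GH_fejer_monotone G H x {p \<in> C. T p = p}"
    and afp: "has_approx_fixed_points T x"
    and cont_or_ec: "continuous_on C T \<or> explicitly_closed C T {p \<in> C. T p = p}"
  shows "\<exists>p \<in> {p \<in> C. T p = p}. x \<longlonglongrightarrow> p"
proof -
  obtain \<sigma> p where pC: "p \<in> C" and lim: "(x \<circ> \<sigma>) \<longlonglongrightarrow> p"
    and close: "\<And>j. dist (x (\<sigma> j)) (T (x (\<sigma> j))) \<le> 1 / (real j + 1)"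
    using approx_fixed_points_convergent_subseq[OF bc xC xb afp] by blast
  have yC: "\<And>j. (x \<circ> \<sigma>) j \<in> C" using xC by simp
  have "p \<in> {p \<in> C. T p = p}"
    using cont_or_ec
  proof
    assume "continuous_on C T"
    from fixed_point_of_tendsto_continuous[OF this yC lim pC] close pC
    show ?thesis by simp
  next
    assume "explicitly_closed C T {p \<in> C. T p = p}"
    from fixed_point_of_tendsto_explicitly_closed[OF this yC lim pC] close
    show ?thesis by simp
  qed
  with GH_fejer_monotone_tendsto_of_subseq[OF Hnn G H fej _ lim] show ?thesis by blast
qed

end
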